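(* Let $n>3$ and let $(\mathcal{P},\cdot,\{-,-\})$ be an $n$-dimensional complex Poisson algebra such that $(\mathcal{P},\cdot)$ is filiform. Then $(\mathcal{P},\cdot,\{-,-\})$ is isomorphic to one of the following algebras with basis $e_1,\dots,e_n$, where in each case $e_i\cdot e_j=e_{i+j}$ for $2\le i+j\le n-1$, the listed products are the only further nonzero ones (up to commutativity of $\cdot$ and anticommutativity of $\{-,-\}$): $\mathcal{P}_{1,1}^n$: no further products; $\mathcal{P}_{1,2}^n$: $\{e_1,e_n\}=e_n$; $\mathcal{P}_{1,3}^n$: $\{e_1,e_n\}=e_{n-1}$; $\mathcal{P}_{1,4}^n$: $e_n\cdot e_n=e_{n-1}$; $\mathcal{P}_{1,5}^n$: $e_n\cdot e_n=e_{n-1}$, $\{e_1,e_n\}=e_{n-1}$.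
   Context: A Poisson algebra is a vector space with a commutative associative product $\cdot$ and a Lie bracket $\{-,-\}$ satisfying $\{x\cdot y,z\}=\{x,z\}\cdot y+x\cdot\{y,z\}$. An $n$-dimensional algebra $\mathcal{P}$ is filiform if $\dim\mathcal{P}^i=n-i$ for $2\le i\le n$, where $\mathcal{P}^1=\mathcal{P}$ and $\mathcal{P}^{k+1}=\mathcal{P}^k\cdot\mathcal{P}$. *)

theory Defs
  imports Complex_Main "HOL-Library.Function_Algebras"
begin

(* An algebra over C is given by a type 'v with a C-scalar multiplication sc
   (a vector space structure), a product m and a bracket b. *)

definition bilinear_op :: "(complex \<Rightarrow> 'v::ab_group_add \<Rightarrow> 'v) \<Rightarrow> ('v \<Rightarrow> 'v \<Rightarrow> 'v) \<Rightarrow> bool" where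
  "bilinear_op sc p \<longleftrightarrow>
     (\<forall>x. Vector_Spaces.linear sc sc (p x)) \<and> (\<forall>y. Vector_Spaces.linear sc sc (\<lambda>x. p x y))"

definition poisson_algebra ::
  "(complex \<Rightarrow> 'v::ab_group_add \<Rightarrow> 'v) \<Rightarrow> ('v \<Rightarrow> 'v \<Rightarrow> 'v) \<Rightarrow> ('v \<Rightarrow> 'v \<Rightarrow> 'v) \<Rightarrow> bool" where
  "poisson_algebra sc m b \<longleftrightarrow>
     vector_space sc \<and> bilinear_op sc m \<and> bilinear_op sc b \<and>
     (\<forall>x y. m x y = m y x) \<and>
     (\<forall>x y z. m (m x y) z = m x (m y z)) \<and>
     (\<forall>x. b x x = 0) \<and>
     (\<forall>x y z. b x (b y z) + b y (b z x) + b z (b x y) = 0) \<and>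
     (\<forall>x y z. b (m x y) z = m (b x z) y + m x (b y z))"

definition n_dimensional :: "(complex \<Rightarrow> 'v::ab_group_add \<Rightarrow> 'v) \<Rightarrow> nat \<Rightarrow> bool" where
  "n_dimensional sc n \<longleftrightarrow>
     (\<exists>B. finite B \<and> \<not> module.dependent sc B \<and> module.span sc B = UNIV \<and> card B = n)"

fun alg_pow :: "(complex \<Rightarrow> 'v::ab_group_add \<Rightarrow> 'v) \<Rightarrow> ('v \<Rightarrow> 'v \<Rightarrow> 'v) \<Rightarrow> nat \<Rightarrow> 'v set" where
  "alg_pow sc m 0 = UNIV"
| "alg_pow sc m (Suc 0) = UNIV"
| "alg_pow sc m (Suc (Suc k)) =
     module.span sc {m x y | x y. x \<in> alg_pow sc m (Suc k)}"

definition filiform :: "(complex \<Rightarrow> 'v::ab_group_add \<Rightarrow> 'v) \<Rightarrow> ('v \<Rightarrow> 'v \<Rightarrow> 'v) \<Rightarrow> nat \<Rightarrow> bool" where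
  "filiform sc m n \<longleftrightarrow>
     (\<forall>i\<in>{2..n}. vector_space.dim sc (alg_pow sc m i) = n - i)"

(* Model algebras P_{1,k}^n on the coordinate space of functions nat => complex
   supported in {1..n}; e i is the i-th standard basis vector. *)

definition cscale :: "complex \<Rightarrow> (nat \<Rightarrow> complex) \<Rightarrow> (nat \<Rightarrow> complex)" where
  "cscale a c = (\<lambda>l. a * c l)"

definition coord_space :: "nat \<Rightarrow> (nat \<Rightarrow> complex) set" where
  "coord_space n = {c. \<forall>l. l \<notin> {1..n} \<longrightarrow> c l = 0}"

definition ebas :: "nat \<Rightarrow> (nat \<Rightarrow> complex)" where
  "ebas i = (\<lambda>l. if l = i then 1 else 0)"

definition mult_tab :: "nat \<Rightarrow> nat \<Rightarrow> nat \<Rightarrow> nat \<Rightarrow> (nat \<Rightarrow> complex)" where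
  "mult_tab n k i j =
     (if 2 \<le> i + j \<and> i + j \<le> n - 1 then ebas (i + j) else 0)
     + (if k \<in> {4, 5} \<and> i = n \<and> j = n then ebas (n - 1) else 0)"

definition brack_tab :: "nat \<Rightarrow> nat \<Rightarrow> nat \<Rightarrow> nat \<Rightarrow> (nat \<Rightarrow> complex)" where
  "brack_tab n k i j =
     (if k = 2 then
        (if i = 1 \<and> j = n then ebas n else if i = n \<and> j = 1 then - ebas n else 0)
      else if k \<in> {3, 5} then
        (if i = 1 \<and> j = n then ebas (n - 1) else if i = n \<and> j = 1 then - ebas (n - 1) else 0)
      else 0)"

definition extend_tab :: "nat \<Rightarrow> (nat \<Rightarrow> nat \<Rightarrow> (nat \<Rightarrow> complex))
    \<Rightarrow> (nat \<Rightarrow> complex) \<Rightarrow> (nat \<Rightarrow> complex) \<Rightarrow> (nat \<Rightarrow> complex)" where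
  "extend_tab n T c d = (\<Sum>i\<in>{1..n}. \<Sum>j\<in>{1..n}. cscale (c i * d j) (T i j))"

definition model_mult :: "nat \<Rightarrow> nat \<Rightarrow> (nat \<Rightarrow> complex) \<Rightarrow> (nat \<Rightarrow> complex) \<Rightarrow> (nat \<Rightarrow> complex)" where
  "model_mult n k = extend_tab n (mult_tab n k)"

definition model_brack :: "nat \<Rightarrow> nat \<Rightarrow> (nat \<Rightarrow> complex) \<Rightarrow> (nat \<Rightarrow> complex) \<Rightarrow> (nat \<Rightarrow> complex)" where
  "model_brack n k = extend_tab n (brack_tab n k)"

definition iso_to_model ::
  "(complex \<Rightarrow> 'v::ab_group_add \<Rightarrow> 'v) \<Rightarrow> ('v \<Rightarrow> 'v \<Rightarrow> 'v) \<Rightarrow> ('v \<Rightarrow> 'v \<Rightarrow> 'v)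
    \<Rightarrow> nat \<Rightarrow> nat \<Rightarrow> ('v \<Rightarrow> (nat \<Rightarrow> complex)) \<Rightarrow> bool" where
  "iso_to_model sc m b n k f \<longleftrightarrow>
     Vector_Spaces.linear sc cscale f \<and> bij_betw f UNIV (coord_space n) \<and>
     (\<forall>x y. f (m x y) = model_mult n k (f x) (f y)) \<and>
     (\<forall>x y. f (b x y) = model_brack n k (f x) (f y))"

end

theory Submission
  imports Defs "HOL-Computational_Algebra.Fundamental_Theorem_Algebra"
begin

(* Polarization gives an x whose square is not in P^3. Each quotient P^k/P^(k+1), 2 <= k < n, is
   a line, and an induction on k shows that x^k is not in P^(k+1); hence P^k is spanned by
   x^k, ..., x^(n-1), these powers are independent, and the annihilator of x inside span(x, P^2)
   is the line through x^(n-1). As x P = P^2, a vector y completing x, ..., x^(n-1) to a basis can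
   be chosen with x y = 0. Then y y = beta x^(n-1) and {x, y} = a y + c x^(n-1); the Leibniz rule
   gives a beta = 0, {x^i, y} = 0 for i >= 2 and {x^i, x^j} = 0. Rescaling x and y brings
   (a, c, beta) to one of five normal forms, and x, ..., x^(n-1), y is then a basis realizing the
   model algebra. *)

section \<open>Coordinates with respect to a basis\<close>

lemma sum_fun_apply: "(\<Sum>i\<in>A. F i) l = (\<Sum>i\<in>A. F i l)"
  by (induct A rule: infinite_finite_induct) auto

lemma vector_space_cscale: "vector_space cscale"
  by unfold_locales (auto simp: cscale_def fun_eq_iff algebra_simps)

lemma extend_tab_in_coord_space:
  assumes "\<And>i j. T i j \<in> coord_space n"
  shows "extend_tab n T c d \<in> coord_space n"
  using assms by (simp add: coord_space_def extend_tab_def sum_fun_apply cscale_def)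

lemma mult_tab_in_coord_space: "2 \<le> n \<Longrightarrow> mult_tab n k i j \<in> coord_space n"
  unfolding coord_space_def mult_tab_def ebas_def by auto

lemma brack_tab_in_coord_space: "2 \<le> n \<Longrightarrow> brack_tab n k i j \<in> coord_space n"
  unfolding coord_space_def brack_tab_def ebas_def by auto

(* For a basis u, the inverse of basis_comb on coord_space is the coordinate map that becomes the
   isomorphism onto a model algebra. *)
definition basis_comb ::
    "(complex \<Rightarrow> 'v::ab_group_add \<Rightarrow> 'v) \<Rightarrow> nat \<Rightarrow> (nat \<Rightarrow> 'v) \<Rightarrow> (nat \<Rightarrow> complex) \<Rightarrow> 'v"
  where "basis_comb sc n u c = (\<Sum>i\<in>{1..n}. sc (c i) (u i))"

locale complex_vector_space = vector_space scale
  for scale :: "complex \<Rightarrow> 'v::ab_group_add \<Rightarrow> 'v" (infixr \<open>*s\<close> 75)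
begin

lemma span_insert_span: "span (insert a (span S)) = span (insert a S)"
  by (simp only: span_insert span_span)

lemma module_hom_bilinear_op:
  assumes "bilinear_op scale F"
  shows module_hom_bilinear_op_right: "module_hom scale scale (F x)"
    and module_hom_bilinear_op_left: "module_hom scale scale (\<lambda>y. F y x)"
  using assms unfolding bilinear_op_def module_hom_iff_linear by blast+

lemma bilinear_op_simps:
  assumes "bilinear_op scale F"
  shows "F 0 y = 0" "F x 0 = 0"
    and "F (x + x') y = F x y + F x' y" "F x (y + y') = F x y + F x y'"
    and "F (x - x') y = F x y - F x' y" "F x (y - y') = F x y - F x y'"
    and "F (- x) y = - F x y" "F x (- y) = - F x y"
    and "F (c *s x) y = c *s F x y" "F x (c *s y) = c *s F x y"
proof -
  note left = module_hom_bilinear_op_left[OF assms]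
    and right = module_hom_bilinear_op_right[OF assms]
  show "F 0 y = 0" "F (x + x') y = F x y + F x' y" "F (x - x') y = F x y - F x' y"
    "F (- x) y = - F x y" "F (c *s x) y = c *s F x y"
    using module_hom.zero[OF left] module_hom.add[OF left] module_hom.diff[OF left]
      module_hom.neg[OF left] module_hom.scale[OF left] by simp_all
  show "F x 0 = 0" "F x (y + y') = F x y + F x y'" "F x (y - y') = F x y - F x y'"
    "F x (- y) = - F x y" "F x (c *s y) = c *s F x y"
    using module_hom.zero[OF right] module_hom.add[OF right] module_hom.diff[OF right]
      module_hom.neg[OF right] module_hom.scale[OF right] by simp_all
qed

lemma bilinear_op_sum_scale:
  assumes "bilinear_op scale F"
  shows "F (\<Sum>i\<in>I. a i *s v i) (\<Sum>j\<in>J. c j *s w j)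
    = (\<Sum>i\<in>I. \<Sum>j\<in>J. (a i * c j) *s F (v i) (w j))"
proof -
  note left = module_hom_bilinear_op_left[OF assms]
    and right = module_hom_bilinear_op_right[OF assms]
  have "F (\<Sum>i\<in>I. a i *s v i) y = (\<Sum>i\<in>I. a i *s F (v i) y)" for y
    by (simp add: module_hom.sum[OF left] module_hom.scale[OF left])
  moreover have "F x (\<Sum>j\<in>J. c j *s w j) = (\<Sum>j\<in>J. c j *s F x (w j))" for x
    by (simp add: module_hom.sum[OF right] module_hom.scale[OF right])
  ultimately show ?thesis
    by (simp add: scale_sum_right sum.swap[of _ J I] mult.commute)
qed

lemma module_hom_basis_comb: "module_hom cscale scale (basis_comb scale n u)"
  unfolding module_hom_iff_linear Vector_Spaces.linear_iff
  using vector_space_cscale vector_space_axioms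
  by (simp add: basis_comb_def cscale_def scale_left_distrib sum.distrib scale_sum_right)

lemma basis_comb_ebas:
  assumes "l \<in> {1..n}"
  shows "basis_comb scale n u (ebas l) = u l"
proof -
  have "ebas l i *s u i = (if i = l then u i else 0)" for i
    by (simp add: ebas_def)
  then show ?thesis
    using assms by (simp add: basis_comb_def)
qed

lemma bij_betw_basis_comb:
  assumes inj: "inj_on u {1..n}" and indep: "independent (u ` {1..n})"
    and spanning: "span (u ` {1..n}) = UNIV"
  shows "bij_betw (basis_comb scale n u) (coord_space n) UNIV"
proof (rule bij_betw_imageI)
  have reindex: "(\<Sum>v\<in>u ` {1..n}. h v *s v) = (\<Sum>i\<in>{1..n}. h (u i) *s u i)" for h
    using sum.reindex[OF inj] by simp
  have kernel: "c = 0" if c: "c \<in> coord_space n" and c0: "basis_comb scale n u c = 0" for c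
  proof
    fix l
    define h where "h = c \<circ> the_inv_into {1..n} u"
    have "(\<Sum>v\<in>u ` {1..n}. h v *s v) = 0"
      unfolding reindex c0[symmetric] basis_comb_def h_def using inj by (simp add: the_inv_into_f_f)
    then have "h (u l) = 0" if "l \<in> {1..n}"
      using independentD[OF indep, of "u ` {1..n}" h] that by simp
    then show "c l = 0 l"
      using c inj by (cases "l \<in> {1..n}") (auto simp: h_def the_inv_into_f_f coord_space_def)
  qed
  show "inj_on (basis_comb scale n u) (coord_space n)"
  proof (rule inj_onI)
    fix c d assume "c \<in> coord_space n" "d \<in> coord_space n"
      and "basis_comb scale n u c = basis_comb scale n u d"
    then show "c = d"
      using kernel[of "c - d"] module_hom.diff[OF module_hom_basis_comb]
      by (simp add: coord_space_def)
  qed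
  show "basis_comb scale n u ` coord_space n = UNIV"
  proof (intro set_eqI iffI)
    fix v :: 'v
    obtain h where "v = (\<Sum>w\<in>u ` {1..n}. h w *s w)"
      using spanning span_finite[of "u ` {1..n}"] by auto
    then have "v = basis_comb scale n u (\<lambda>i. if i \<in> {1..n} then h (u i) else 0)"
      unfolding reindex basis_comb_def by simp
    moreover have "(\<lambda>i. if i \<in> {1..n} then h (u i) else 0) \<in> coord_space n"
      by (simp add: coord_space_def)
    ultimately show "v \<in> basis_comb scale n u ` coord_space n"
      by blast
  qed simp
qed

lemma basis_comb_extend_tab:
  assumes "bilinear_op scale F"
    and "\<And>i j. i \<in> {1..n} \<Longrightarrow> j \<in> {1..n} \<Longrightarrow>
      F (u i) (u j) = basis_comb scale n u (T i j)"
  shows "F (basis_comb scale n u c) (basis_comb scale n u d)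
    = basis_comb scale n u (extend_tab n T c d)"
  using assms module_hom_basis_comb[of n u]
  by (simp add: basis_comb_def[of _ _ _ c] basis_comb_def[of _ _ _ d] bilinear_op_sum_scale
      extend_tab_def module_hom.sum module_hom.scale)

lemma basis_comb_mult_tab:
  assumes "2 \<le> n"
  shows "basis_comb scale n u (mult_tab n k i j) =
    (if 2 \<le> i + j \<and> i + j \<le> n - 1 then u (i + j) else 0)
    + (if k \<in> {4, 5} \<and> i = n \<and> j = n then u (n - 1) else 0)"
  using assms unfolding mult_tab_def module_hom.add[OF module_hom_basis_comb]
  by (auto simp: basis_comb_ebas module_hom.zero[OF module_hom_basis_comb])

lemma basis_comb_brack_tab:
  assumes "2 \<le> n"
  shows "basis_comb scale n u (brack_tab n k i j) =
    (if k = 2 then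
       (if i = 1 \<and> j = n then u n else if i = n \<and> j = 1 then - u n else 0)
     else if k \<in> {3, 5} then
       (if i = 1 \<and> j = n then u (n - 1) else if i = n \<and> j = 1 then - u (n - 1) else 0)
     else 0)"
  using assms unfolding brack_tab_def
  by (auto simp: basis_comb_ebas module_hom.neg[OF module_hom_basis_comb]
      module_hom.zero[OF module_hom_basis_comb])

lemma iso_to_model_of_basis:
  assumes bilinear: "bilinear_op scale m" "bilinear_op scale b" and n: "2 \<le> n"
    and basis: "inj_on u {1..n}" "independent (u ` {1..n})" "span (u ` {1..n}) = UNIV"
    and mult: "\<And>i j. i \<in> {1..n} \<Longrightarrow> j \<in> {1..n} \<Longrightarrow>
      m (u i) (u j) = basis_comb scale n u (mult_tab n k i j)"
    and brack: "\<And>i j. i \<in> {1..n} \<Longrightarrow> j \<in> {1..n} \<Longrightarrow>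
      b (u i) (u j) = basis_comb scale n u (brack_tab n k i j)"
  shows "\<exists>f. iso_to_model scale m b n k f"
proof -
  let ?g = "basis_comb scale n u"
  define f where "f = the_inv_into (coord_space n) ?g"
  have bij: "bij_betw ?g (coord_space n) UNIV"
    using basis by (rule bij_betw_basis_comb)
  have f_in: "f v \<in> coord_space n" and g_f: "?g (f v) = v" for v
    using bij_betw_the_inv_into[OF bij] f_the_inv_into_f_bij_betw[OF bij]
    unfolding f_def bij_betw_def by auto
  have f_g: "f (?g c) = c" if "c \<in> coord_space n" for c
    using bij that unfolding f_def bij_betw_def by (simp add: the_inv_into_f_f)
  have hom: "f (F v w) = extend_tab n T (f v) (f w)"
    if "bilinear_op scale F"
      and "\<And>i j. i \<in> {1..n} \<Longrightarrow> j \<in> {1..n} \<Longrightarrow> F (u i) (u j) = ?g (T i j)"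
      and "\<And>i j. T i j \<in> coord_space n" for F T v w
  proof -
    have "F v w = ?g (extend_tab n T (f v) (f w))"
      using basis_comb_extend_tab[OF that(1,2)] g_f by metis
    then show ?thesis
      using f_g extend_tab_in_coord_space that(3) by metis
  qed
  have "Vector_Spaces.linear scale cscale f"
    unfolding Vector_Spaces.linear_iff
  proof (intro conjI allI)
    fix v w :: 'v and a
    have "?g (f v + f w) = v + w" "?g (cscale a (f v)) = a *s v"
      using module_hom.add[OF module_hom_basis_comb] module_hom.scale[OF module_hom_basis_comb] g_f
      by simp_all
    moreover have "f v + f w \<in> coord_space n" "cscale a (f v) \<in> coord_space n"
      using f_in by (simp_all add: coord_space_def cscale_def)
    ultimately show "f (v + w) = f v + f w" "f (a *s v) = cscale a (f v)"
      using f_g by metis+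
  qed (use vector_space_axioms vector_space_cscale in auto)
  moreover have "bij_betw f UNIV (coord_space n)"
    unfolding f_def by (rule bij_betw_the_inv_into[OF bij])
  moreover have "f (m v w) = model_mult n k (f v) (f w)" for v w
    unfolding model_mult_def using bilinear(1) mult mult_tab_in_coord_space[OF n] by (rule hom)
  moreover have "f (b v w) = model_brack n k (f v) (f w)" for v w
    unfolding model_brack_def using bilinear(2) brack brack_tab_in_coord_space[OF n] by (rule hom)
  ultimately show ?thesis
    unfolding iso_to_model_def by blast
qed

end

section \<open>Powers in a Poisson algebra\<close>

declare alg_pow.simps(3) [simp del]

(* The algebra has no unit: mult_pow m x 0 = 0 is a junk value; only positive exponents are used. *)
fun mult_pow :: "('v::zero \<Rightarrow> 'v \<Rightarrow> 'v) \<Rightarrow> 'v \<Rightarrow> nat \<Rightarrow> 'v" where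
  "mult_pow m x 0 = 0"
| "mult_pow m x (Suc 0) = x"
| "mult_pow m x (Suc (Suc k)) = m (mult_pow m x (Suc k)) x"

locale complex_poisson = complex_vector_space scale
  for scale :: "complex \<Rightarrow> 'v::ab_group_add \<Rightarrow> 'v" (infixr \<open>*s\<close> 75) +
  fixes m b :: "'v \<Rightarrow> 'v \<Rightarrow> 'v"
  assumes poisson: "poisson_algebra scale m b"
begin

lemma
  shows bilinear_mult: "bilinear_op scale m"
    and bilinear_brack: "bilinear_op scale b"
    and mult_commute: "m x y = m y x"
    and mult_assoc: "m (m x y) z = m x (m y z)"
    and brack_self [simp]: "b x x = 0"
    and brack_mult_left: "b (m x y) z = m (b x z) y + m x (b y z)"
  using poisson unfolding poisson_algebra_def by blast+

lemmas mult_simps [simp] = bilinear_op_simps[OF bilinear_mult]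
lemmas brack_simps [simp] = bilinear_op_simps[OF bilinear_brack]

lemmas module_hom_mult = module_hom_bilinear_op_right[OF bilinear_mult]

lemma brack_antisym: "b x y = - b y x"
proof -
  have "b (x + y) (x + y) = b x x + b y x + (b x y + b y y)"
    by (simp only: brack_simps(3,4))
  then have "b x y + b y x = 0"
    by (simp add: add.commute)
  then show ?thesis
    by (simp add: eq_neg_iff_add_eq_0)
qed

lemma brack_mult_right: "b z (m x y) = m (b z x) y + m x (b z y)"
proof -
  have "b z (m x y) = - (m (b x z) y + m x (b y z))"
    by (simp add: brack_antisym[of z] brack_mult_left)
  then show ?thesis
    by (simp add: brack_antisym[of x z] brack_antisym[of y z])
qed

lemma subspace_mult_vimage:
  assumes "subspace S"
  shows subspace_mult_left_vimage: "subspace {u. m u v \<in> S}"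
    and subspace_mult_right_vimage: "subspace {v. m u v \<in> S}"
  using assms by (auto simp: subspace_def)

abbreviation alg_power :: "nat \<Rightarrow> 'v set" (\<open>\<P>\<close>)
  where "\<P> k \<equiv> alg_pow scale m k"

lemma subspace_alg_pow: "subspace (\<P> k)"
  by (cases k; cases "k - 1") (auto simp: alg_pow.simps(3))

lemma span_alg_pow [simp]: "span (\<P> k) = \<P> k"
  using subspace_alg_pow by simp

lemma alg_pow_Suc: "1 \<le> k \<Longrightarrow> \<P> (Suc k) = span {m u v | u v. u \<in> \<P> k}"
  by (cases k) (auto simp: alg_pow.simps(3))

lemma mult_mem_alg_pow_Suc: "1 \<le> k \<Longrightarrow> u \<in> \<P> k \<Longrightarrow> m u v \<in> \<P> (Suc k)"
  by (auto simp: alg_pow_Suc intro: span_base)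

lemma alg_pow_Suc_subset: "\<P> (Suc k) \<subseteq> \<P> k"
proof (induction k rule: nat_less_induct)
  case (1 k)
  show ?case
  proof (cases "k \<le> 1")
    case False
    then obtain j where k: "k = Suc j" "1 \<le> j"
      by (cases k) auto
    have "{m u v | u v. u \<in> \<P> k} \<subseteq> {m u v | u v. u \<in> \<P> j}"
      using "1.IH" k by auto
    then show ?thesis
      using k by (simp add: alg_pow_Suc span_mono)
  qed (auto simp: le_Suc_eq)
qed

lemma alg_pow_antimono: "i \<le> j \<Longrightarrow> \<P> j \<subseteq> \<P> i"
  by (induction j rule: dec_induct) (use alg_pow_Suc_subset in auto)

lemma mult_mem_alg_pow:
  assumes "1 \<le> i" "1 \<le> j" "u \<in> \<P> i" "v \<in> \<P> j"
  shows "m u v \<in> \<P> (i + j)"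
  using assms(2,4)
proof (induction j arbitrary: v rule: dec_induct)
  case base
  then show ?case
    using assms(1,3) by (simp add: mult_mem_alg_pow_Suc)
next
  case (step j)
  have "m u (m w z) \<in> \<P> (i + Suc j)" if "w \<in> \<P> j" for w z
  proof -
    have "m u w \<in> \<P> (i + j)"
      using step.IH[OF that] .
    then have "m (m u w) z \<in> \<P> (Suc (i + j))"
      using assms(1) by (intro mult_mem_alg_pow_Suc) auto
    then show ?thesis
      by (simp add: mult_assoc)
  qed
  then have "span {m w z | w z. w \<in> \<P> j} \<subseteq> {v. m u v \<in> \<P> (i + Suc j)}"
    by (intro span_minimal subspace_mult_right_vimage subspace_alg_pow) auto
  then show ?case
    using step by (auto simp: alg_pow_Suc)
qed

lemma mult_pow_Suc: "1 \<le> k \<Longrightarrow> mult_pow m x (Suc k) = m (mult_pow m x k) x"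
  by (cases k) auto

lemma mult_pow_Suc': "1 \<le> k \<Longrightarrow> mult_pow m x (Suc k) = m x (mult_pow m x k)"
  by (simp add: mult_pow_Suc mult_commute)

lemma mult_pow_add:
  assumes "1 \<le> i" "1 \<le> j"
  shows "mult_pow m x (i + j) = m (mult_pow m x i) (mult_pow m x j)"
  using assms(2)
proof (induction j rule: dec_induct)
  case base
  then show ?case
    using assms(1) by (simp add: mult_pow_Suc)
next
  case (step j)
  then show ?case
    using assms(1) by (simp add: mult_pow_Suc mult_assoc)
qed

lemma mult_pow_mem_alg_pow: "1 \<le> i \<Longrightarrow> mult_pow m x i \<in> \<P> i"
  by (induction i rule: dec_induct) (auto simp: mult_pow_Suc mult_mem_alg_pow_Suc)

lemma mult_pow_scale: "mult_pow m (c *s x) i = (c ^ i) *s mult_pow m x i"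
proof (induction i)
  case (Suc i)
  then show ?case
    by (cases "i = 0") (simp_all add: mult_pow_Suc mult.commute)
qed simp

lemma mult_pow_mult_eq_0:
  assumes "m x y = 0"
  shows "1 \<le> i \<Longrightarrow> m (mult_pow m x i) y = 0"
  by (induction i rule: dec_induct) (simp_all add: assms mult_pow_Suc mult_assoc)

lemma brack_mult_pow_self: "1 \<le> i \<Longrightarrow> b (mult_pow m x i) x = 0"
  by (induction i rule: dec_induct) (simp_all add: mult_pow_Suc brack_mult_left)

lemma brack_mult_pow_mult_pow:
  assumes "1 \<le> i"
  shows "1 \<le> j \<Longrightarrow> b (mult_pow m x i) (mult_pow m x j) = 0"
  by (induction j rule: dec_induct)
    (simp_all add: brack_mult_pow_self[OF assms] mult_pow_Suc brack_mult_right)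

lemma brack_mult_pow_eq_0:
  assumes "\<And>i. 1 \<le> i \<Longrightarrow> m (mult_pow m x i) (b x y) = 0"
  shows "2 \<le> i \<Longrightarrow> b (mult_pow m x i) y = 0"
proof (induction i rule: dec_induct)
  case base
  then show ?case
    using assms[of 1] by (simp add: numeral_2_eq_2 brack_mult_left mult_commute[of "b x y" x])
next
  case (step i)
  then show ?case
    using assms[of i] by (simp add: mult_pow_Suc brack_mult_left)
qed

end

section \<open>Filiform Poisson algebras\<close>

locale filiform_poisson = complex_poisson scale m b + finite_dimensional_vector_space scale Basis
  for scale :: "complex \<Rightarrow> 'v::ab_group_add \<Rightarrow> 'v" (infixr \<open>*s\<close> 75)
    and m b :: "'v \<Rightarrow> 'v \<Rightarrow> 'v" and Basis :: "'v set" +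
  fixes n :: nat
  assumes card_Basis: "card Basis = n"
    and filiform: "filiform scale m n"
    and n_gt_3: "3 < n"
begin

lemma dim_alg_pow: "2 \<le> i \<Longrightarrow> i \<le> n \<Longrightarrow> dim (\<P> i) = n - i"
  using filiform unfolding filiform_def by auto

lemma alg_pow_n: "\<P> n = {0}"
  using dim_alg_pow[of n] n_gt_3 subspace_alg_pow[of n]
  by (auto simp: subspace_0)

lemma mult_pow_eq_0: "n \<le> i \<Longrightarrow> mult_pow m x i = 0"
  using mult_pow_mem_alg_pow[of i x] alg_pow_antimono[of n i] alg_pow_n n_gt_3 by auto

lemma mult_pow_mult_last: "1 \<le> i \<Longrightarrow> m (mult_pow m x i) (mult_pow m x (n - 1)) = 0"
  using mult_pow_add[of i "n - 1" x] mult_pow_eq_0[of "i + (n - 1)" x] n_gt_3 by simp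

lemma alg_pow_eq_span_insert:
  assumes k: "2 \<le> k" "k < n" and w: "w \<in> \<P> k" "w \<notin> \<P> (Suc k)"
  shows "\<P> k = span (insert w (\<P> (Suc k)))"
proof (rule subspace_dim_equal[symmetric])
  show "span (insert w (\<P> (Suc k))) \<subseteq> \<P> k"
    using w alg_pow_Suc_subset subspace_alg_pow by (intro span_minimal) auto
  have "dim (insert w (\<P> (Suc k))) = dim (\<P> (Suc k)) + 1"
    using w(2) by (simp add: dim_insert)
  then show "dim (\<P> k) \<le> dim (span (insert w (\<P> (Suc k))))"
    using k dim_alg_pow[of k] dim_alg_pow[of "Suc k"] by simp
qed (simp_all add: subspace_alg_pow)

lemma exists_square_notin_alg_pow_3: "\<exists>x. m x x \<notin> \<P> 3"
proof (rule ccontr)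
  assume "\<nexists>x. m x x \<notin> \<P> 3"
  then have squares: "m x x \<in> \<P> 3" for x
    by blast
  have products: "m u v \<in> \<P> 3" for u v
  proof -
    have "m (u + v) (u + v) - m u u - m v v = 2 *s m u v"
      using scale_left_distrib[of 1 1 "m u v"] by (simp add: mult_commute[of v u])
    then have "2 *s m u v \<in> \<P> 3"
      using squares subspace_alg_pow by (metis subspace_diff)
    then have "(1 / 2) *s 2 *s m u v \<in> \<P> 3"
      using subspace_alg_pow subspace_scale by blast
    then show ?thesis
      by simp
  qed
  have "\<P> 2 = span {m u v | u v. u \<in> \<P> 1}"
    using alg_pow_Suc[of 1] by (simp add: numeral_2_eq_2)
  also have "\<dots> \<subseteq> \<P> 3"
    using products subspace_alg_pow by (intro span_minimal) auto
  finally have "\<P> 2 \<subseteq> \<P> 3" .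
  then have "dim (\<P> 2) \<le> dim (\<P> 3)"
    by (rule dim_subset)
  then show False
    using dim_alg_pow[of 2] dim_alg_pow[of 3] n_gt_3 by simp
qed

end

locale filiform_generator = filiform_poisson scale m b Basis n
  for scale :: "complex \<Rightarrow> 'v::ab_group_add \<Rightarrow> 'v" (infixr \<open>*s\<close> 75)
    and m b :: "'v \<Rightarrow> 'v \<Rightarrow> 'v" and Basis :: "'v set" and n :: nat +
  fixes x :: 'v
  assumes square_notin: "m x x \<notin> \<P> 3"
begin

lemma alg_pow_2_eq_span: "\<P> 2 = span (insert (m x x) (\<P> 3))"
  using alg_pow_eq_span_insert[of 2 "m x x"] n_gt_3 square_notin mult_mem_alg_pow_Suc[of 1 x x]
  by (simp add: numeral_2_eq_2 numeral_3_eq_3)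

(* P^(k+1) is spanned by x^k P and P^(k+2), and x^k P = x^(k-1) (x P) lies in
   x^(k-1) P^2 = x^(k-1) span(x^2, P^3). *)
lemma alg_pow_Suc_subset_span:
  assumes k: "2 \<le> k" and span_k: "\<P> k \<subseteq> span (insert (mult_pow m x k) (\<P> (Suc k)))"
  shows "\<P> (Suc k) \<subseteq> span (insert (mult_pow m x (Suc k)) (\<P> (Suc (Suc k))))"
    (is "_ \<subseteq> ?T")
proof -
  have T: "subspace ?T" "\<P> (Suc (Suc k)) \<subseteq> ?T" "mult_pow m x (Suc k) \<in> ?T"
    using span_superset[of "insert (mult_pow m x (Suc k)) (\<P> (Suc (Suc k)))"] by auto
  have lower_times_alg_pow_2: "m (mult_pow m x (k - 1)) d \<in> ?T" if "d \<in> \<P> 2" for d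
  proof -
    have "m (mult_pow m x (k - 1)) (m x x) = mult_pow m x (Suc k)"
      using mult_pow_add[of "k - 1" 2 x] k by (simp add: numeral_2_eq_2)
    moreover have "m (mult_pow m x (k - 1)) p \<in> \<P> (Suc (Suc k))" if "p \<in> \<P> 3" for p
      using mult_mem_alg_pow[of "k - 1" 3, OF _ _ mult_pow_mem_alg_pow that] k
      by (simp add: numeral_3_eq_3)
    ultimately have "insert (m x x) (\<P> 3) \<subseteq> {d. m (mult_pow m x (k - 1)) d \<in> ?T}"
      using T(2,3) by auto
    then have "span (insert (m x x) (\<P> 3)) \<subseteq> {d. m (mult_pow m x (k - 1)) d \<in> ?T}"
      using T(1) by (intro span_minimal subspace_mult_right_vimage)
    then show ?thesis
      using that alg_pow_2_eq_span by blast
  qed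
  have "m (mult_pow m x k) c \<in> ?T" for c
  proof -
    have "m x c \<in> \<P> 2"
      using mult_mem_alg_pow_Suc[of 1 x c] by (simp add: numeral_2_eq_2)
    then have "m (mult_pow m x (k - 1)) (m x c) \<in> ?T"
      by (rule lower_times_alg_pow_2)
    moreover have "mult_pow m x k = m (mult_pow m x (k - 1)) x"
      using mult_pow_Suc[of "k - 1" x] k by simp
    ultimately show ?thesis
      by (simp add: mult_assoc)
  qed
  moreover have "m a c \<in> ?T" if "a \<in> \<P> (Suc k)" for a c
    using mult_mem_alg_pow_Suc[OF _ that] T(2) by auto
  ultimately have "insert (mult_pow m x k) (\<P> (Suc k)) \<subseteq> {a. m a c \<in> ?T}" for c
    by auto
  then have "span (insert (mult_pow m x k) (\<P> (Suc k))) \<subseteq> {a. m a c \<in> ?T}" for c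
    using T(1) by (intro span_minimal subspace_mult_left_vimage)
  then have "{m a c | a c. a \<in> \<P> k} \<subseteq> ?T"
    using span_k by blast
  then show ?thesis
    using k T(1) by (simp add: alg_pow_Suc span_minimal)
qed

lemma mult_pow_notin_alg_pow_Suc:
  "2 \<le> k \<Longrightarrow> k < n \<Longrightarrow> mult_pow m x k \<notin> \<P> (Suc k)"
proof (induction k rule: dec_induct)
  case base
  then show ?case
    using square_notin by (simp add: numeral_2_eq_2 numeral_3_eq_3)
next
  case (step k)
  have "\<P> k = span (insert (mult_pow m x k) (\<P> (Suc k)))"
    using step mult_pow_mem_alg_pow[of k x] by (intro alg_pow_eq_span_insert) auto
  then have span_Suc: "\<P> (Suc k) \<subseteq> span (insert (mult_pow m x (Suc k)) (\<P> (Suc (Suc k))))"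
    using step(1) by (intro alg_pow_Suc_subset_span) auto
  show ?case
  proof
    assume "mult_pow m x (Suc k) \<in> \<P> (Suc (Suc k))"
    then have "\<P> (Suc k) \<subseteq> \<P> (Suc (Suc k))"
      using span_Suc by (simp add: span_redundant)
    then have "dim (\<P> (Suc k)) \<le> dim (\<P> (Suc (Suc k)))"
      by (rule dim_subset)
    then show False
      using dim_alg_pow[of "Suc k"] dim_alg_pow[of "Suc (Suc k)"] step by simp
  qed
qed

lemma alg_pow_eq_span_insert_mult_pow:
  "2 \<le> k \<Longrightarrow> k < n \<Longrightarrow> \<P> k = span (insert (mult_pow m x k) (\<P> (Suc k)))"
  by (simp add: alg_pow_eq_span_insert mult_pow_mem_alg_pow mult_pow_notin_alg_pow_Suc)

lemma mult_pow_last_neq_0: "mult_pow m x (n - 1) \<noteq> 0"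
  using mult_pow_notin_alg_pow_Suc[of "n - 1"] n_gt_3 alg_pow_n by auto

lemma alg_pow_eq_span_mult_pows:
  assumes "2 \<le> k" "k \<le> n"
  shows "\<P> k = span (mult_pow m x ` {k..<n})"
  using assms(2)
proof (induction rule: inc_induct)
  case base
  then show ?case
    using alg_pow_n by simp
next
  case (step j)
  have interval: "{j..<n} = insert j {Suc j..<n}"
    using step(2) by auto
  have "\<P> j = span (insert (mult_pow m x j) (\<P> (Suc j)))"
    using step assms(1) by (intro alg_pow_eq_span_insert_mult_pow) auto
  also have "\<dots> = span (insert (mult_pow m x j) (mult_pow m x ` {Suc j..<n}))"
    by (simp only: step.IH span_insert_span)
  finally show ?case
    by (simp only: interval image_insert)
qed

lemma alg_pow_last_eq_span: "\<P> (n - 1) = span {mult_pow m x (n - 1)}"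
proof -
  have "{n - 1..<n} = {n - 1}"
    using n_gt_3 by auto
  then show ?thesis
    using alg_pow_eq_span_mult_pows[of "n - 1"] n_gt_3 by simp
qed

lemma mem_alg_pow_Suc_if_mult_mem:
  assumes j: "1 \<le> j" "Suc j < n"
    and v: "v \<in> span (insert (mult_pow m x j) (\<P> (Suc j)))" and xv: "m x v \<in> \<P> (Suc (Suc j))"
  shows "v \<in> \<P> (Suc j)"
proof -
  obtain c where w: "v - c *s mult_pow m x j \<in> \<P> (Suc j)"
    using v span_breakdown_eq by auto
  define w where "w = v - c *s mult_pow m x j"
  have "m x w \<in> \<P> (Suc (Suc j))"
    using mult_mem_alg_pow[of 1 "Suc j" x w] w unfolding w_def by simp
  moreover have "c *s mult_pow m x (Suc j) = m x v - m x w"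
    using j unfolding w_def by (simp add: mult_pow_Suc')
  ultimately have "c *s mult_pow m x (Suc j) \<in> \<P> (Suc (Suc j))"
    using xv by (simp add: subspace_diff[OF subspace_alg_pow])
  moreover have "mult_pow m x (Suc j) \<notin> \<P> (Suc (Suc j))"
    using j by (intro mult_pow_notin_alg_pow_Suc) auto
  ultimately have "c = 0"
    using subspace_scale[OF subspace_alg_pow, of "c *s mult_pow m x (Suc j)" "Suc (Suc j)" "1 / c"]
    by (cases "c = 0") auto
  then show ?thesis
    using w by simp
qed

lemma annihilated_by_generator:
  assumes "v \<in> span (insert x (\<P> 2))" and "m x v = 0"
  shows "\<exists>c. v = c *s mult_pow m x (n - 1)"
proof -
  have "v \<in> \<P> j" if "2 \<le> j" "j \<le> n - 1" for j
    using that
  proof (induction j rule: dec_induct)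
    case base
    then show ?case
      using assms n_gt_3 mem_alg_pow_Suc_if_mult_mem[of 1 v]
      by (simp add: numeral_2_eq_2 subspace_0[OF subspace_alg_pow])
  next
    case (step j)
    then show ?case
      using assms(2) alg_pow_eq_span_insert_mult_pow[of j] mem_alg_pow_Suc_if_mult_mem[of j v]
      by (simp add: subspace_0[OF subspace_alg_pow])
  qed
  then have "v \<in> \<P> (n - 1)"
    using n_gt_3 by simp
  then show ?thesis
    unfolding alg_pow_last_eq_span span_singleton by auto
qed

lemma mult_pow_notin_span_higher:
  assumes k: "1 \<le> k" "k < n"
  shows "mult_pow m x k \<notin> span (mult_pow m x ` {Suc k..<n})"
proof (cases "Suc k = n")
  case True
  then show ?thesis
    using mult_pow_last_neq_0 by auto
next
  case False
  define q where "q = mult_pow m x (n - 1 - k)"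
  have "m (mult_pow m x i) q = 0" if i: "i \<in> {Suc k..<n}" for i
  proof -
    have "1 \<le> n - 1 - k"
      using k False by simp
    then have "m (mult_pow m x i) q = mult_pow m x (i + (n - 1 - k))"
      using i k unfolding q_def by (intro mult_pow_add[symmetric]) auto
    also have "\<dots> = 0"
      using i by (intro mult_pow_eq_0) auto
    finally show ?thesis .
  qed
  then have "span (mult_pow m x ` {Suc k..<n}) \<subseteq> {v. m v q \<in> {0}}"
    by (intro span_minimal subspace_mult_left_vimage) auto
  moreover have "m (mult_pow m x k) q = mult_pow m x (n - 1)"
    using k False mult_pow_add[of k "n - 1 - k" x] unfolding q_def by simp
  ultimately show ?thesis
    using mult_pow_last_neq_0 by auto
qed

lemma independent_mult_pows:
  assumes "1 \<le> k"
  shows "independent (mult_pow m x ` {k..<n})"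
proof (cases "k \<le> n")
  case True
  then show ?thesis
  proof (induction rule: inc_induct)
    case (step j)
    have "{j..<n} = insert j {Suc j..<n}"
      using step(2) by auto
    then show ?case
      using step assms mult_pow_notin_span_higher[of j] by (simp add: independent_insertI)
  qed (simp add: independent_empty)
qed (simp add: independent_empty)

lemma inj_on_mult_pow: "inj_on (mult_pow m x) {1..<n}"
proof -
  have "mult_pow m x i \<noteq> mult_pow m x j" if "1 \<le> i" "i < j" "j < n" for i j
    using that mult_pow_notin_span_higher[of i]
      span_base[of "mult_pow m x j" "mult_pow m x ` {Suc i..<n}"]
    by auto
  then show ?thesis
    by (intro inj_onI) (metis atLeastLessThan_iff linorder_neqE_nat)
qed

section \<open>Normal form and classification\<close>

lemma span_insert_complement:
  assumes "y \<notin> span (mult_pow m x ` {1..<n})"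
  shows "span (insert y (mult_pow m x ` {1..<n})) = UNIV"
proof -
  have "independent (insert y (mult_pow m x ` {1..<n}))"
    using assms independent_mult_pows[of 1] by (simp add: independent_insertI)
  moreover have "y \<notin> mult_pow m x ` {1..<n}"
    using assms span_base by blast
  then have "card (insert y (mult_pow m x ` {1..<n})) = n"
    using inj_on_mult_pow n_gt_3 by (simp add: card_image)
  ultimately have "UNIV \<subseteq> span (insert y (mult_pow m x ` {1..<n}))"
    using card_ge_dim_independent[OF subset_UNIV] card_Basis by simp
  then show ?thesis
    by auto
qed

lemma exists_annihilated_complement:
  obtains y where "y \<notin> span (mult_pow m x ` {1..<n})" and "m x y = 0"
proof -
  let ?S = "mult_pow m x ` {1..<n}"
  have "span ?S \<noteq> UNIV"
  proof
    assume "span ?S = UNIV"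
    then have "dim (UNIV :: 'v set) \<le> card ?S"
      by (intro dim_le_card) auto
    also have "\<dots> \<le> n - 1"
      using card_image_le[of "{1..<n}" "mult_pow m x"] by simp
    finally show False
      using card_Basis n_gt_3 by simp
  qed
  then obtain y0 where y0: "y0 \<notin> span ?S"
    by blast
  have "m x ` mult_pow m x ` {1..<n - 1} = (\<lambda>i. mult_pow m x (Suc i)) ` {1..<n - 1}"
    unfolding image_image by (rule image_cong) (simp_all add: mult_pow_Suc')
  also have "\<dots> = mult_pow m x ` {2..<n}"
    using n_gt_3 by (simp add: image_image[of _ Suc, symmetric] numeral_2_eq_2)
  finally have shift: "m x ` mult_pow m x ` {1..<n - 1} = mult_pow m x ` {2..<n}" .
  have "\<P> 2 = span (mult_pow m x ` {2..<n})"
    using alg_pow_eq_span_mult_pows[of 2] n_gt_3 by simp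
  also have "\<dots> = m x ` span (mult_pow m x ` {1..<n - 1})"
    unfolding shift[symmetric] by (rule module_hom.span_image[OF module_hom_mult])
  finally have "\<P> 2 = m x ` span (mult_pow m x ` {1..<n - 1})" .
  moreover have "m x y0 \<in> \<P> 2"
    using mult_mem_alg_pow_Suc[of 1 x y0] by (simp add: numeral_2_eq_2)
  ultimately obtain w where w: "w \<in> span (mult_pow m x ` {1..<n - 1})" and xw: "m x y0 = m x w"
    by auto
  have "mult_pow m x ` {1..<n - 1} \<subseteq> ?S"
    by (intro image_mono) auto
  then have "w \<in> span ?S"
    using w span_mono by blast
  then have "y0 - w \<notin> span ?S"
    using y0 span_add[of "y0 - w" ?S w] by auto
  moreover have "m x (y0 - w) = 0"
    using xw by simp
  ultimately show ?thesis
    by (rule that)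
qed

lemma normal_form_exists:
  obtains y a c \<beta> where "y \<notin> span (mult_pow m x ` {1..<n})" and "m x y = 0"
    and "m y y = \<beta> *s mult_pow m x (n - 1)"
    and "b x y = a *s y + c *s mult_pow m x (n - 1)"
    and "a * \<beta> = 0"
proof -
  let ?S = "mult_pow m x ` {1..<n}" and ?p = "mult_pow m x (n - 1)"
  obtain y where y: "y \<notin> span ?S" and xy: "m x y = 0"
    by (rule exists_annihilated_complement)
  have "mult_pow m x i \<in> insert x (\<P> 2)" if "1 \<le> i" for i
  proof (cases "i = 1")
    case False
    then show ?thesis
      using that mult_pow_mem_alg_pow[of i x] alg_pow_antimono[of 2 i] by auto
  qed simp
  then have "?S \<subseteq> insert x (\<P> 2)"
    by (meson atLeastLessThan_iff image_subsetI)
  then have S_sub: "span ?S \<subseteq> span (insert x (\<P> 2))"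
    by (rule span_mono)
  have "m y y \<in> \<P> 2"
    using mult_mem_alg_pow_Suc[of 1 y y] by (simp add: numeral_2_eq_2)
  then have "m y y \<in> span (insert x (\<P> 2))"
    by (simp add: span_base)
  moreover have "m x (m y y) = 0"
    by (simp add: mult_assoc[symmetric] xy)
  ultimately obtain \<beta> where yy: "m y y = \<beta> *s ?p"
    using annihilated_by_generator by blast
  have "b x y \<in> span (insert y ?S)"
    using span_insert_complement[OF y] by simp
  then obtain a where a: "b x y - a *s y \<in> span ?S"
    using span_breakdown_eq by blast
  have "m x (b y x) = b (m x y) x"
    by (simp add: brack_mult_left)
  then have "m x (b x y - a *s y) = 0"
    using xy brack_antisym[of y x] by simp
  then obtain c where "b x y - a *s y = c *s ?p"
    using annihilated_by_generator a S_sub by blast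
  then have bxy: "b x y = a *s y + c *s ?p"
    by (simp add: algebra_simps)
  have "(a * \<beta>) *s ?p = m (b x y) y + m x (b y y)"
    using mult_pow_mult_eq_0[OF xy, of "n - 1"] n_gt_3 by (simp add: bxy yy)
  also have "\<dots> = 0"
    using xy brack_mult_left[of x y y] by simp
  finally have "a * \<beta> = 0"
    using mult_pow_last_neq_0 by simp
  with y xy yy bxy show ?thesis
    by (rule that)
qed

definition adapted_basis :: "'v \<Rightarrow> nat \<Rightarrow> 'v"
  where "adapted_basis y i = (if i = n then y else mult_pow m x i)"

lemma adapted_basis_is_basis:
  assumes y: "y \<notin> span (mult_pow m x ` {1..<n})"
  shows "inj_on (adapted_basis y) {1..n}"
    and "independent (adapted_basis y ` {1..n})"
    and "span (adapted_basis y ` {1..n}) = UNIV"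
proof -
  have interval: "{1..n} = insert n {1..<n}"
    using n_gt_3 by auto
  have lower: "adapted_basis y i = mult_pow m x i" if "i \<in> {1..<n}" for i
    using that by (simp add: adapted_basis_def)
  have image: "adapted_basis y ` {1..n} = insert y (mult_pow m x ` {1..<n})"
    unfolding interval image_insert image_cong[OF refl lower] by (simp add: adapted_basis_def)
  have "inj_on (adapted_basis y) {1..<n}"
    using inj_on_mult_pow inj_on_cong[of "{1..<n}" "adapted_basis y" "mult_pow m x"] lower
    by blast
  moreover have "y \<notin> mult_pow m x ` {1..<n}"
    using y span_base by blast
  ultimately show "inj_on (adapted_basis y) {1..n}"
    unfolding interval using image_cong[OF refl lower] by (simp add: adapted_basis_def)
  show "independent (adapted_basis y ` {1..n})"
    unfolding image using y independent_mult_pows[of 1] by (simp add: independent_insertI)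
  show "span (adapted_basis y ` {1..n}) = UNIV"
    unfolding image using y by (rule span_insert_complement)
qed

lemma adapted_basis_mult:
  assumes xy: "m x y = 0" and yy: "m y y = (if k \<in> {4, 5} then mult_pow m x (n - 1) else 0)"
    and ij: "i \<in> {1..n}" "j \<in> {1..n}"
  shows "m (adapted_basis y i) (adapted_basis y j)
    = basis_comb scale n (adapted_basis y) (mult_tab n k i j)"
proof -
  have lower: "adapted_basis y l = mult_pow m x l" if "l < n" for l
    using that by (simp add: adapted_basis_def)
  have "m (adapted_basis y i) (adapted_basis y j) =
    (if 2 \<le> i + j \<and> i + j \<le> n - 1 then adapted_basis y (i + j) else 0)
    + (if k \<in> {4, 5} \<and> i = n \<and> j = n then adapted_basis y (n - 1) else 0)"
  proof (cases "i = n \<or> j = n")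
    case True
    then consider "i = n" "j = n" | "i = n" "j < n" | "i < n" "j = n"
      using ij by fastforce
    then show ?thesis
    proof cases
      case 1
      then show ?thesis
        using yy n_gt_3 lower[of "n - 1"] by (auto simp: adapted_basis_def)
    next
      case 2
      then show ?thesis
        using ij mult_pow_mult_eq_0[OF xy, of j] by (auto simp: adapted_basis_def mult_commute[of y])
    next
      case 3
      then show ?thesis
        using ij mult_pow_mult_eq_0[OF xy, of i] by (auto simp: adapted_basis_def)
    qed
  next
    case False
    then have "m (adapted_basis y i) (adapted_basis y j) = mult_pow m x (i + j)"
      using ij by (simp add: adapted_basis_def mult_pow_add)
    moreover have "mult_pow m x (i + j) = 0" if "n \<le> i + j"
      using that by (rule mult_pow_eq_0)
    ultimately show ?thesis
      using False ij lower[of "i + j"] by auto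
  qed
  then show ?thesis
    using n_gt_3 by (simp add: basis_comb_mult_tab)
qed

lemma adapted_basis_brack:
  assumes xy: "m x y = 0"
    and bxy: "b x y = (if k = 2 then y else if k \<in> {3, 5} then mult_pow m x (n - 1) else 0)"
    and ij: "i \<in> {1..n}" "j \<in> {1..n}"
  shows "b (adapted_basis y i) (adapted_basis y j)
    = basis_comb scale n (adapted_basis y) (brack_tab n k i j)"
proof -
  have "m (mult_pow m x l) (b x y) = 0" if "1 \<le> l" for l
    using bxy mult_pow_mult_eq_0[OF xy that] mult_pow_mult_last[OF that] by simp
  then have y_central: "b (mult_pow m x l) y = 0" if "2 \<le> l" for l
    using that by (rule brack_mult_pow_eq_0)
  have "b (adapted_basis y i) (adapted_basis y j) =
    (if k = 2 then
       (if i = 1 \<and> j = n then adapted_basis y n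
        else if i = n \<and> j = 1 then - adapted_basis y n else 0)
     else if k \<in> {3, 5} then
       (if i = 1 \<and> j = n then adapted_basis y (n - 1)
        else if i = n \<and> j = 1 then - adapted_basis y (n - 1) else 0)
     else 0)"
  proof (cases "i = n \<or> j = n")
    case True
    then consider "i = n" "j = n" | "i = n" "j = 1" | "i = n" "2 \<le> j" "j < n"
      | "i = 1" "j = n" | "2 \<le> i" "i < n" "j = n"
      using ij by fastforce
    then show ?thesis
    proof cases
      case 1
      then show ?thesis
        using n_gt_3 by simp
    next
      case 2
      then show ?thesis
        using n_gt_3 bxy brack_antisym[of y x] by (auto simp: adapted_basis_def)
    next
      case 3
      then show ?thesis
        using n_gt_3 y_central[of j] brack_antisym[of y] by (auto simp: adapted_basis_def)
    next
      case 4
      then show ?thesis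
        using n_gt_3 bxy by (auto simp: adapted_basis_def)
    next
      case 5
      then show ?thesis
        using n_gt_3 y_central[of i] by (auto simp: adapted_basis_def)
    qed
  next
    case False
    then show ?thesis
      using ij brack_mult_pow_mult_pow[of i j x] by (simp add: adapted_basis_def)
  qed
  then show ?thesis
    using n_gt_3 by (simp add: basis_comb_brack_tab)
qed

lemma iso_to_model_of_normal_form:
  assumes y: "y \<notin> span (mult_pow m x ` {1..<n})" and xy: "m x y = 0"
    and yy: "m y y = (if k \<in> {4, 5} then mult_pow m x (n - 1) else 0)"
    and bxy: "b x y = (if k = 2 then y else if k \<in> {3, 5} then mult_pow m x (n - 1) else 0)"
  shows "\<exists>f. iso_to_model scale m b n k f"
  using bilinear_mult bilinear_brack _ adapted_basis_is_basis[OF y]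
    adapted_basis_mult[OF xy yy] adapted_basis_brack[OF xy bxy]
  by (rule iso_to_model_of_basis) (use n_gt_3 in auto)

end

(* The only use of the algebraic closedness of the complex numbers. *)
lemma normalizing_scalars:
  fixes a c \<beta> :: complex
  assumes a\<beta>: "a * \<beta> = 0" and N: "2 < N"
  shows "\<exists>k\<in>{1..5::nat}. \<exists>l \<mu> \<nu>. l \<noteq> 0 \<and> \<mu> \<noteq> 0
    \<and> \<mu>\<^sup>2 * \<beta> = (if k \<in> {4, 5} then l ^ N else 0)
    \<and> l * a = (if k = 2 then 1 else 0)
    \<and> l * \<mu> * c - l * a * \<nu> = (if k \<in> {3, 5} then l ^ N else 0)"
proof -
  consider "\<beta> = 0" "a = 0" "c = 0" | "\<beta> = 0" "a = 0" "c \<noteq> 0" | "\<beta> = 0" "a \<noteq> 0"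
    | "\<beta> \<noteq> 0" "a = 0" "c = 0" | "\<beta> \<noteq> 0" "a = 0" "c \<noteq> 0"
    using a\<beta> by auto
  then show ?thesis
  proof cases
    case 1
    show ?thesis
      by (rule bexI[where x = 1], rule exI[where x = 1], rule exI[where x = 1]) (use 1 in auto)
  next
    case 2
    show ?thesis
      by (rule bexI[where x = 3], rule exI[where x = 1], rule exI[where x = "1 / c"]) (use 2 in auto)
  next
    case 3
    show ?thesis
      by (rule bexI[where x = 2], rule exI[where x = "1 / a"], rule exI[where x = 1],
          rule exI[where x = "c / a"]) (use 3 in auto)
  next
    case 4
    obtain s where s: "s ^ 2 = \<beta>"
      using nth_root_exists[of 2 \<beta>] by auto
    show ?thesis
      by (rule bexI[where x = 4], rule exI[where x = 1], rule exI[where x = "1 / s"])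
        (use 4 s in \<open>auto simp: power_divide\<close>)
  next
    case 5
    obtain l where l: "l ^ (N - 2) = c\<^sup>2 / \<beta>"
      using nth_root_exists[of "N - 2" "c\<^sup>2 / \<beta>"] N by auto
    moreover have "c\<^sup>2 / \<beta> \<noteq> 0"
      using 5 by simp
    ultimately have "l \<noteq> 0"
      using N by (metis zero_less_diff zero_power)
    define \<mu> where "\<mu> = l ^ (N - 1) / c"
    have "(N - 1) * 2 = N + (N - 2)"
      using N by simp
    then have "\<mu>\<^sup>2 * \<beta> = l ^ N * (l ^ (N - 2) * \<beta> / c\<^sup>2)"
      by (simp add: \<mu>_def power_divide power_add flip: power_mult)
    also have "\<dots> = l ^ N"
      using 5 l by simp
    finally have "\<mu>\<^sup>2 * \<beta> = l ^ N" .
    moreover have "l * \<mu> * c = l ^ N"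
      using 5 N by (simp add: \<mu>_def power_eq_if)
    ultimately show ?thesis
      by (intro bexI[where x = 5] exI[where x = l] exI[where x = \<mu>]) (use 5 \<open>l \<noteq> 0\<close> in auto)
  qed
qed

context filiform_generator
begin

lemma filiform_generator_scale:
  assumes "l \<noteq> 0"
  shows "filiform_generator scale m b Basis n (l *s x)"
proof
  show "m (l *s x) (l *s x) \<notin> \<P> 3"
  proof
    assume "m (l *s x) (l *s x) \<in> \<P> 3"
    then have "(1 / l\<^sup>2) *s m (l *s x) (l *s x) \<in> \<P> 3"
      by (rule subspace_scale[OF subspace_alg_pow])
    then show False
      using assms square_notin by (simp add: power2_eq_square)
  qed
qed

lemma iso_to_model_of_rescaling:
  assumes y: "y \<notin> span (mult_pow m x ` {1..<n})" and xy: "m x y = 0"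
    and yy: "m y y = \<beta> *s mult_pow m x (n - 1)"
    and bxy: "b x y = a *s y + c *s mult_pow m x (n - 1)"
    and l: "l \<noteq> 0" and \<mu>: "\<mu> \<noteq> 0"
    and e1: "\<mu>\<^sup>2 * \<beta> = (if k \<in> {4, 5} then l ^ (n - 1) else 0)"
    and e2: "l * a = (if k = 2 then 1 else 0)"
    and e3: "l * \<mu> * c - l * a * \<nu> = (if k \<in> {3, 5} then l ^ (n - 1) else 0)"
  shows "\<exists>f. iso_to_model scale m b n k f"
proof -
  let ?p = "mult_pow m x (n - 1)"
  define x' where "x' = l *s x"
  define y' where "y' = \<mu> *s y + \<nu> *s ?p"
  have pow': "mult_pow m x' i = (l ^ i) *s mult_pow m x i" for i
    unfolding x'_def by (rule mult_pow_scale)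
  interpret rescaled: filiform_generator scale m b Basis n x'
    unfolding x'_def using l by (rule filiform_generator_scale)
  have xp: "m x ?p = 0"
    using mult_pow_mult_last[of "Suc 0" x] by simp
  have py: "m ?p y = 0"
    using mult_pow_mult_eq_0[OF xy, of "n - 1"] n_gt_3 by simp
  have pp: "m ?p ?p = 0"
    using mult_pow_mult_last[of "n - 1" x] n_gt_3 by simp
  have bxp: "b x ?p = 0"
    using brack_mult_pow_self[of "n - 1" x] brack_antisym[of x ?p] n_gt_3 by simp
  have "span (mult_pow m x' ` {1..<n}) \<subseteq> span (mult_pow m x ` {1..<n})"
    unfolding pow' by (intro span_minimal) (auto intro: span_scale span_base)
  moreover have "y = (1 / \<mu>) *s (y' - \<nu> *s ?p)"
    using \<mu> by (simp add: y'_def)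
  moreover have "?p \<in> span (mult_pow m x ` {1..<n})"
    using n_gt_3 by (intro span_base) auto
  ultimately have y': "y' \<notin> span (mult_pow m x' ` {1..<n})"
    using y by (metis span_diff span_scale subsetD)
  have xy': "m x' y' = 0"
    using xy xp by (simp add: x'_def y'_def)
  have "m y' y' = (\<mu>\<^sup>2 * \<beta>) *s ?p"
    using yy py pp mult_commute[of y ?p] by (simp add: y'_def power2_eq_square)
  then have yy': "m y' y' = (if k \<in> {4, 5} then mult_pow m x' (n - 1) else 0)"
    using e1 by (simp add: pow')
  have "b x' y' = (l * \<mu>) *s (a *s y + c *s ?p)"
    using bxy bxp by (simp add: x'_def y'_def mult.commute)
  also have "\<dots> = (l * a) *s y' + (l * \<mu> * c - l * a * \<nu>) *s ?p"
    by (simp add: y'_def algebra_simps)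
  finally have bxy':
    "b x' y' = (if k = 2 then y' else if k \<in> {3, 5} then mult_pow m x' (n - 1) else 0)"
    using e2 e3 by (simp add: pow')
  show ?thesis
    using y' xy' yy' bxy' by (rule rescaled.iso_to_model_of_normal_form)
qed

lemma exists_iso_to_model: "\<exists>k\<in>{1..5}. \<exists>f. iso_to_model scale m b n k f"
proof -
  obtain y a c \<beta> where y: "y \<notin> span (mult_pow m x ` {1..<n})" and xy: "m x y = 0"
    and yy: "m y y = \<beta> *s mult_pow m x (n - 1)"
    and bxy: "b x y = a *s y + c *s mult_pow m x (n - 1)" and a\<beta>: "a * \<beta> = 0"
    by (rule normal_form_exists)
  have "2 < n - 1"
    using n_gt_3 by simp
  then obtain k :: nat and l \<mu> \<nu> where "k \<in> {1..5}" "l \<noteq> 0" "\<mu> \<noteq> 0"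
    "\<mu>\<^sup>2 * \<beta> = (if k \<in> {4, 5} then l ^ (n - 1) else 0)"
    "l * a = (if k = 2 then 1 else 0)"
    "l * \<mu> * c - l * a * \<nu> = (if k \<in> {3, 5} then l ^ (n - 1) else 0)"
    using normalizing_scalars[OF a\<beta>] by blast
  then show ?thesis
    using iso_to_model_of_rescaling[OF y xy yy bxy] by blast
qed

end

theorem theorem3p9:
  fixes sc :: "complex \<Rightarrow> 'v::ab_group_add \<Rightarrow> 'v"
    and m b :: "'v \<Rightarrow> 'v \<Rightarrow> 'v"
    and n :: nat
  assumes "n > 3"
    and "poisson_algebra sc m b"
    and "n_dimensional sc n"
    and "filiform sc m n"
  shows "\<exists>k\<in>{1..5}. \<exists>f. iso_to_model sc m b n k f"
proof -
  obtain B where B: "finite B" "\<not> module.dependent sc B" "module.span sc B = UNIV" "card B = n"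
    using assms(3) unfolding n_dimensional_def by blast
  interpret vector_space sc
    using assms(2) unfolding poisson_algebra_def by blast
  interpret filiform_poisson sc m b B n
    using B assms by unfold_locales auto
  obtain x where "m x x \<notin> alg_pow sc m 3"
    using exists_square_notin_alg_pow_3 by blast
  then interpret filiform_generator sc m b B n x
    by unfold_locales
  show ?thesis
    by (rule exists_iso_to_model)
qed

end
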